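(* In the cost setting described in the context, for every choice of $d^*\le D/2$ there is an instance (with minimal expected delay $d^*$) for which every algorithm has pseudo-regret $\Omega(d^* )$.
   Context: Delay-as-payoff bandit: there are $K$ arms, a horizon $T$ and a maximum delay $D$. Each arm $i$ has a distribution $\mathcal{D}_i$ on $\{0,1,\dots,D\}$; at each step $t$ the agent chooses $i_t$ based on observed feedback, a delay $d_t\sim\mathcal{D}_{i_t}$ is drawn independently and revealed only at time $t+d_t$; the payoff is the cost $c_t=d_t/D$, to be minimized. Let $\mu(i)=\mathbb{E}_{X\sim\mathcal{D}_i}[X/D]$, $\mu^*=\min_i\mu(i)$, $d^*=D\mu^*$ (the minimal expected delay over arms). Pseudo-regret: $\mathbb{E}[\sum_{t=1}^T c_t]-T\mu^*$. *)

theory Defs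
  imports "HOL-Probability.Probability"
begin

text \<open>Arms are 0,...,K-1; rounds are 0,...,T-1.
  An instance is a family of delay distributions nu i on naturals (supported in {0..D}).
  A history is the list of (chosen arm, realized delay) pairs of the past rounds.\<close>

type_synonym history = "(nat \<times> nat) list"
type_synonym observation = "(nat \<times> nat option) list"

text \<open>What the agent sees before choosing at round t: its own past arms, and for each past
  round s the delay d_s iff it has been revealed, i.e. s + d_s < t (revealed at time s + d_s).\<close>
definition observe :: "nat \<Rightarrow> history \<Rightarrow> observation" where
  "observe t h = map (\<lambda>s. (fst (h ! s), if s + snd (h ! s) < t then Some (snd (h ! s)) else None))
                     [0..<length h]"

type_synonym policy = "nat \<Rightarrow> observation \<Rightarrow> nat pmf"

definition valid_policy :: "nat \<Rightarrow> policy \<Rightarrow> bool" where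
  "valid_policy K \<pi> \<longleftrightarrow> (\<forall>t obs. set_pmf (\<pi> t obs) \<subseteq> {..<K})"

definition valid_instance :: "nat \<Rightarrow> nat \<Rightarrow> (nat \<Rightarrow> nat pmf) \<Rightarrow> bool" where
  "valid_instance K D \<nu> \<longleftrightarrow> (\<forall>i<K. set_pmf (\<nu> i) \<subseteq> {0..D})"

fun hist :: "(nat \<Rightarrow> nat pmf) \<Rightarrow> policy \<Rightarrow> nat \<Rightarrow> history pmf" where
  "hist \<nu> \<pi> 0 = return_pmf []"
| "hist \<nu> \<pi> (Suc t) =
     bind_pmf (hist \<nu> \<pi> t) (\<lambda>h.
     bind_pmf (\<pi> t (observe t h)) (\<lambda>i.
     bind_pmf (\<nu> i) (\<lambda>d. return_pmf (h @ [(i, d)]))))"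

definition mean_delay :: "(nat \<Rightarrow> nat pmf) \<Rightarrow> nat \<Rightarrow> real" where
  "mean_delay \<nu> i = measure_pmf.expectation (\<nu> i) real"

definition min_mean_delay :: "nat \<Rightarrow> (nat \<Rightarrow> nat pmf) \<Rightarrow> real" where
  "min_mean_delay K \<nu> = Min (mean_delay \<nu> ` {..<K})"

definition pseudo_regret :: "nat \<Rightarrow> nat \<Rightarrow> nat \<Rightarrow> (nat \<Rightarrow> nat pmf) \<Rightarrow> policy \<Rightarrow> real" where
  "pseudo_regret K D T \<nu> \<pi> =
     measure_pmf.expectation (hist \<nu> \<pi> T) (\<lambda>h. \<Sum>p\<leftarrow>h. real (snd p) / real D)
     - real T * (min_mean_delay K \<nu> / real D)"

end

theory Submission
  imports Defs
begin

(* Let arm j have delay \<lfloor>dstar\<rfloor> or \<lfloor>dstar\<rfloor> + 1 with mean dstar, and every other arm delay D.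
   Since no delay is shorter than \<lfloor>dstar\<rfloor>, nothing is revealed during the first
   n = min T (\<lfloor>dstar\<rfloor> + 1) \<ge> dstar rounds, so the law of the arms played there does not
   depend on j. Hence one of the arms 0, 1 is played at most n/2 times in expectation; making it
   the good arm, the other \<ge> n/2 pulls each cost the gap 1 - dstar/D \<ge> 1/2, so the regret is at
   least dstar/4. *)

lemma expectation_bind_pmf_finite:
  fixes f :: "'b \<Rightarrow> real"
  assumes "finite (set_pmf M)" "\<And>x. x \<in> set_pmf M \<Longrightarrow> finite (set_pmf (N x))"
  shows "measure_pmf.expectation (bind_pmf M N) f =
         measure_pmf.expectation M (\<lambda>x. measure_pmf.expectation (N x) f)"
  using assms by (simp add: pmf_expectation_bind[of "set_pmf M"] integral_measure_pmf[of "set_pmf M"])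

lemma expectation_add_finite:
  fixes f g :: "'a \<Rightarrow> real"
  assumes "finite (set_pmf M)"
  shows "measure_pmf.expectation M (\<lambda>x. f x + g x) =
         measure_pmf.expectation M f + measure_pmf.expectation M g"
  using assms by (simp add: Bochner_Integration.integral_add integrable_measure_pmf_finite)

lemma expectation_mono_finite:
  fixes f g :: "'a \<Rightarrow> real"
  assumes "finite (set_pmf M)" "\<And>x. x \<in> set_pmf M \<Longrightarrow> f x \<le> g x"
  shows "measure_pmf.expectation M f \<le> measure_pmf.expectation M g"
  using assms by (intro integral_mono_AE AE_pmfI integrable_measure_pmf_finite) auto

lemma expectation_cong_pmf:
  fixes f g :: "'a \<Rightarrow> real"
  assumes "\<And>x. x \<in> set_pmf M \<Longrightarrow> f x = g x"
  shows "measure_pmf.expectation M f = measure_pmf.expectation M g"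
  using assms by (intro integral_cong_AE AE_pmfI) auto

lemma finite_set_pmf_policy: "valid_policy K \<pi> \<Longrightarrow> finite (set_pmf (\<pi> t obs))"
  unfolding valid_policy_def by (meson finite_lessThan finite_subset)

lemma finite_set_pmf_instance: "valid_instance K D \<nu> \<Longrightarrow> i < K \<Longrightarrow> finite (set_pmf (\<nu> i))"
  unfolding valid_instance_def by (meson finite_atLeastAtMost finite_subset)

lemma finite_set_pmf_chosen_arm:
  "valid_policy K \<pi> \<Longrightarrow> valid_instance K D \<nu> \<Longrightarrow> i \<in> set_pmf (\<pi> t obs) \<Longrightarrow>
   finite (set_pmf (\<nu> i))"
  by (auto simp: valid_policy_def intro: finite_set_pmf_instance)

lemma length_hist: "h \<in> set_pmf (hist \<nu> \<pi> t) \<Longrightarrow> length h = t"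
  by (induction t arbitrary: h) auto

lemma hist_entry_in_support:
  assumes "valid_policy K \<pi>" "h \<in> set_pmf (hist \<nu> \<pi> t)" "(i, d) \<in> set h"
  shows "i < K \<and> d \<in> set_pmf (\<nu> i)"
  using assms(2,3)
proof (induction t arbitrary: h)
  case (Suc t)
  then show ?case using assms(1) by (fastforce simp: valid_policy_def)
qed simp

lemma finite_set_pmf_hist:
  assumes "valid_policy K \<pi>" "valid_instance K D \<nu>"
  shows "finite (set_pmf (hist \<nu> \<pi> t))"
  by (induction t)
    (auto simp: set_bind_pmf finite_set_pmf_policy[OF assms(1)] finite_set_pmf_chosen_arm[OF assms])

lemma expectation_hist_Suc:
  fixes g :: "history \<Rightarrow> real"
  assumes "valid_policy K \<pi>" "valid_instance K D \<nu>"
  shows "measure_pmf.expectation (hist \<nu> \<pi> (Suc t)) g =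
    measure_pmf.expectation (hist \<nu> \<pi> t) (\<lambda>h. measure_pmf.expectation (\<pi> t (observe t h))
      (\<lambda>i. measure_pmf.expectation (\<nu> i) (\<lambda>d. g (h @ [(i, d)]))))"
proof -
  show ?thesis
    using finite_set_pmf_hist[OF assms] finite_set_pmf_policy[OF assms(1)]
      finite_set_pmf_chosen_arm[OF assms]
    by (simp add: expectation_bind_pmf_finite set_bind_pmf map_pmf_def[symmetric])
qed

lemma expectation_hist_Suc_sum:
  fixes c :: "nat \<times> nat \<Rightarrow> real"
  assumes "valid_policy K \<pi>" "valid_instance K D \<nu>"
  shows "measure_pmf.expectation (hist \<nu> \<pi> (Suc t)) (\<lambda>h. \<Sum>p\<leftarrow>h. c p) =
    measure_pmf.expectation (hist \<nu> \<pi> t) (\<lambda>h. \<Sum>p\<leftarrow>h. c p) +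
    measure_pmf.expectation (hist \<nu> \<pi> t) (\<lambda>h. measure_pmf.expectation (\<pi> t (observe t h))
      (\<lambda>i. measure_pmf.expectation (\<nu> i) (\<lambda>d. c (i, d))))"
proof -
  have "measure_pmf.expectation (hist \<nu> \<pi> (Suc t)) (\<lambda>h. \<Sum>p\<leftarrow>h. c p) =
    measure_pmf.expectation (hist \<nu> \<pi> t) (\<lambda>h. (\<Sum>p\<leftarrow>h. c p) +
      measure_pmf.expectation (\<pi> t (observe t h)) (\<lambda>i. measure_pmf.expectation (\<nu> i) (\<lambda>d. c (i, d))))"
    unfolding expectation_hist_Suc[OF assms]
    using finite_set_pmf_chosen_arm[OF assms] finite_set_pmf_policy[OF assms(1)]
    by (intro expectation_cong_pmf) (simp add: expectation_add_finite cong: expectation_cong_pmf)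
  then show ?thesis
    by (simp add: expectation_add_finite finite_set_pmf_hist[OF assms])
qed

lemma expectation_hist_sum_cost:
  fixes f :: "nat \<Rightarrow> real"
  assumes "valid_policy K \<pi>" "valid_instance K D \<nu>"
  shows "measure_pmf.expectation (hist \<nu> \<pi> t) (\<lambda>h. \<Sum>p\<leftarrow>h. f (snd p)) =
         measure_pmf.expectation (hist \<nu> \<pi> t) (\<lambda>h. \<Sum>p\<leftarrow>h. measure_pmf.expectation (\<nu> (fst p)) f)"
  by (induction t) (simp_all add: expectation_hist_Suc_sum[OF assms] del: hist.simps(2))

definition arm_gap :: "nat \<Rightarrow> nat \<Rightarrow> (nat \<Rightarrow> nat pmf) \<Rightarrow> nat \<Rightarrow> real" where
  "arm_gap K D \<nu> i = (mean_delay \<nu> i - min_mean_delay K \<nu>) / real D"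

lemma arm_gap_nonneg: "i < K \<Longrightarrow> 0 \<le> arm_gap K D \<nu> i"
  unfolding arm_gap_def min_mean_delay_def by (simp add: Min_le)

lemma pseudo_regret_eq_expected_gaps:
  assumes "valid_policy K \<pi>" "valid_instance K D \<nu>"
  shows "pseudo_regret K D T \<nu> \<pi> =
         measure_pmf.expectation (hist \<nu> \<pi> T) (\<lambda>h. \<Sum>p\<leftarrow>h. arm_gap K D \<nu> (fst p))"
proof -
  let ?\<mu> = "min_mean_delay K \<nu> / real D"
  have "measure_pmf.expectation (hist \<nu> \<pi> T) (\<lambda>h. \<Sum>p\<leftarrow>h. real (snd p) / real D) =
        measure_pmf.expectation (hist \<nu> \<pi> T) (\<lambda>h. \<Sum>p\<leftarrow>h. mean_delay \<nu> (fst p) / real D)"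
    unfolding expectation_hist_sum_cost[OF assms, where f = "\<lambda>d. real d / real D"]
    by (simp add: mean_delay_def)
  also have "\<dots> = measure_pmf.expectation (hist \<nu> \<pi> T)
                    (\<lambda>h. (\<Sum>p\<leftarrow>h. arm_gap K D \<nu> (fst p)) + real T * ?\<mu>)"
    unfolding arm_gap_def diff_divide_distrib
    by (intro expectation_cong_pmf) (simp add: sum_list_subtractf sum_list_triv length_hist del: hist.simps)
  finally show ?thesis
    unfolding pseudo_regret_def
    by (simp add: expectation_add_finite finite_set_pmf_hist[OF assms] del: hist.simps)
qed

lemma map_pmf_take_hist: "n \<le> t \<Longrightarrow> map_pmf (take n) (hist \<nu> \<pi> t) = hist \<nu> \<pi> n"
proof (induction t)
  case (Suc t)
  show ?case
  proof (cases "n = Suc t")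
    case True
    then have "map_pmf (take n) (hist \<nu> \<pi> (Suc t)) = map_pmf id (hist \<nu> \<pi> (Suc t))"
      by (intro map_pmf_cong refl) (simp add: length_hist del: hist.simps)
    then show ?thesis using True by simp
  next
    case False
    then have "n \<le> t" using Suc.prems by simp
    have "map_pmf (take n) (hist \<nu> \<pi> (Suc t)) =
          hist \<nu> \<pi> t \<bind> (\<lambda>h. \<pi> t (observe t h) \<bind> (\<lambda>i. \<nu> i \<bind> (\<lambda>d. return_pmf (take n h))))"
      unfolding hist.simps map_bind_pmf map_return_pmf
      using \<open>n \<le> t\<close> by (intro bind_pmf_cong refl) (simp add: length_hist)
    then have "map_pmf (take n) (hist \<nu> \<pi> (Suc t)) = map_pmf (take n) (hist \<nu> \<pi> t)"
      by (simp add: map_pmf_def)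
    then show ?thesis using Suc.IH \<open>n \<le> t\<close> by simp
  qed
qed simp

lemma expected_prefix_gaps_le_pseudo_regret:
  assumes "valid_policy K \<pi>" "valid_instance K D \<nu>" "n \<le> T"
  shows "measure_pmf.expectation (hist \<nu> \<pi> n) (\<lambda>h. \<Sum>p\<leftarrow>h. arm_gap K D \<nu> (fst p))
         \<le> pseudo_regret K D T \<nu> \<pi>"
proof -
  let ?G = "\<lambda>h. \<Sum>p\<leftarrow>h. arm_gap K D \<nu> (fst p)"
  have "?G (take n h) \<le> ?G h" if "h \<in> set_pmf (hist \<nu> \<pi> T)" for h
  proof -
    have "0 \<le> ?G (drop n h)"
      using hist_entry_in_support[OF assms(1) that] arm_gap_nonneg
      by (intro sum_list_nonneg) (auto dest!: in_set_dropD)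
    moreover have "?G h = ?G (take n h) + ?G (drop n h)"
      by (metis append_take_drop_id map_append sum_list_append)
    ultimately show ?thesis by simp
  qed
  then have "measure_pmf.expectation (hist \<nu> \<pi> T) (\<lambda>h. ?G (take n h)) \<le> pseudo_regret K D T \<nu> \<pi>"
    unfolding pseudo_regret_eq_expected_gaps[OF assms(1,2)]
    by (intro expectation_mono_finite finite_set_pmf_hist[OF assms(1,2)])
  then show ?thesis
    by (simp add: map_pmf_take_hist[OF assms(3), symmetric] del: hist.simps)
qed

fun blind_arms :: "policy \<Rightarrow> nat \<Rightarrow> nat list pmf" where
  "blind_arms \<pi> 0 = return_pmf []"
| "blind_arms \<pi> (Suc t) =
     bind_pmf (blind_arms \<pi> t) (\<lambda>a.
     bind_pmf (\<pi> t (map (\<lambda>i. (i, None)) a)) (\<lambda>i. return_pmf (a @ [i])))"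

lemma length_blind_arms: "a \<in> set_pmf (blind_arms \<pi> t) \<Longrightarrow> length a = t"
  by (induction t arbitrary: a) auto

lemma finite_set_pmf_blind_arms: "valid_policy K \<pi> \<Longrightarrow> finite (set_pmf (blind_arms \<pi> t))"
  by (induction t) (auto simp: set_bind_pmf finite_set_pmf_policy)

lemma observe_without_feedback:
  assumes "length h = t" "\<And>p. p \<in> set h \<Longrightarrow> t \<le> snd p"
  shows "observe t h = map (\<lambda>i. (i, None)) (map fst h)"
proof (rule nth_equalityI)
  fix s assume "s < length (observe t h)"
  then have "s < length h" by (simp add: observe_def)
  moreover have "t \<le> snd (h ! s)" using assms(2) nth_mem[OF \<open>s < length h\<close>] by blast
  ultimately show "observe t h ! s = map (\<lambda>i. (i, None)) (map fst h) ! s"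
    by (simp add: observe_def)
qed (simp add: observe_def)

lemma map_fst_hist_without_feedback:
  assumes "valid_policy K \<pi>" "\<And>i. i < K \<Longrightarrow> set_pmf (\<nu> i) \<subseteq> {m..}" "t \<le> Suc m"
  shows "map_pmf (map fst) (hist \<nu> \<pi> t) = blind_arms \<pi> t"
  using assms(3)
proof (induction t)
  case (Suc t)
  have "observe t h = map (\<lambda>i. (i, None)) (map fst h)" if h: "h \<in> set_pmf (hist \<nu> \<pi> t)" for h
  proof (rule observe_without_feedback)
    show "length h = t" using h by (rule length_hist)
    fix p assume "p \<in> set h"
    then have "fst p < K" "snd p \<in> set_pmf (\<nu> (fst p))"
      using hist_entry_in_support[OF assms(1) h, of "fst p" "snd p"] by auto
    then show "t \<le> snd p" using assms(2) Suc.prems by fastforce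
  qed
  then have "map_pmf (map fst) (hist \<nu> \<pi> (Suc t)) =
      hist \<nu> \<pi> t \<bind> (\<lambda>h. \<pi> t (map (\<lambda>i. (i, None)) (map fst h)) \<bind> (\<lambda>i. return_pmf (map fst h @ [i])))"
    unfolding hist.simps map_bind_pmf map_return_pmf
    by (intro bind_pmf_cong refl) simp_all
  also have "\<dots> = blind_arms \<pi> (Suc t)"
    using Suc by (simp add: bind_map_pmf flip: Suc.IH)
  finally show ?case .
qed simp

lemma exists_rarely_chosen:
  fixes M :: "'a list pmf"
  assumes "finite (set_pmf M)" "\<And>a. a \<in> set_pmf M \<Longrightarrow> length a = n" "k \<noteq> l"
  obtains j where "j \<in> {k, l}"
    "real n / 2 \<le> measure_pmf.expectation M (\<lambda>a. real (length (filter (\<lambda>i. i \<noteq> j) a)))"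
proof -
  let ?E = "\<lambda>j. measure_pmf.expectation M (\<lambda>a. real (length (filter (\<lambda>i. i \<noteq> j) a)))"
  have "length a \<le> length (filter (\<lambda>i. i \<noteq> k) a) + length (filter (\<lambda>i. i \<noteq> l) a)" for a
    using assms(3) by (induction a) auto
  then have "measure_pmf.expectation M (\<lambda>_. real n) \<le>
      measure_pmf.expectation M (\<lambda>a. real (length (filter (\<lambda>i. i \<noteq> k) a)) +
                                     real (length (filter (\<lambda>i. i \<noteq> l) a)))"
    using assms(1,2) by (intro expectation_mono_finite) (auto simp flip: of_nat_add)
  then have "real n \<le> ?E k + ?E l"
    by (simp add: expectation_add_finite assms(1))
  then show ?thesis
    using that[of k] that[of l] by (cases "real n / 2 \<le> ?E k") auto
qed

definition two_point_delay :: "real \<Rightarrow> nat pmf" where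
  "two_point_delay x = map_pmf (\<lambda>b. if b then Suc (nat \<lfloor>x\<rfloor>) else nat \<lfloor>x\<rfloor>) (bernoulli_pmf (frac x))"

lemma set_pmf_two_point_delay: "set_pmf (two_point_delay x) \<subseteq> {nat \<lfloor>x\<rfloor>, Suc (nat \<lfloor>x\<rfloor>)}"
  by (auto simp: two_point_delay_def)

lemma expectation_two_point_delay:
  "0 \<le> x \<Longrightarrow> measure_pmf.expectation (two_point_delay x) real = x"
  using frac_ge_0[of x] frac_lt_1[of x]
  by (simp add: two_point_delay_def integral_bernoulli_pmf) (simp add: frac_def algebra_simps)

definition hard_instance :: "nat \<Rightarrow> real \<Rightarrow> nat \<Rightarrow> nat \<Rightarrow> nat pmf" where
  "hard_instance D x j = (\<lambda>i. if i = j then two_point_delay x else return_pmf D)"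

lemma set_pmf_hard_instance:
  assumes "0 \<le> x" "x < real D"
  shows "set_pmf (hard_instance D x j i) \<subseteq> {nat \<lfloor>x\<rfloor>..D}"
proof -
  have "nat \<lfloor>x\<rfloor> < D" using assms by linarith
  then show ?thesis
    using set_pmf_two_point_delay[of x] by (auto simp: hard_instance_def)
qed

lemma valid_instance_hard_instance:
  "0 \<le> x \<Longrightarrow> x < real D \<Longrightarrow> valid_instance K D (hard_instance D x j)"
  unfolding valid_instance_def using set_pmf_hard_instance by fastforce

lemma mean_delay_hard_instance:
  "0 \<le> x \<Longrightarrow> mean_delay (hard_instance D x j) i = (if i = j then x else real D)"
  by (simp add: mean_delay_def hard_instance_def expectation_two_point_delay)

lemma min_mean_delay_hard_instance:
  assumes "0 \<le> x" "x \<le> real D" "j < K"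
  shows "min_mean_delay K (hard_instance D x j) = x"
  unfolding min_mean_delay_def
proof (rule Min_eqI)
  show "x \<in> mean_delay (hard_instance D x j) ` {..<K}"
    using assms by (auto simp: mean_delay_hard_instance intro!: image_eqI[of _ _ j])
qed (use assms in \<open>auto simp: mean_delay_hard_instance\<close>)

lemma pseudo_regret_hard_instance_ge:
  assumes "valid_policy K \<pi>" "j < K" "0 \<le> x" "x < real D" "n \<le> T" "n \<le> Suc (nat \<lfloor>x\<rfloor>)"
  shows "(1 - x / real D) * measure_pmf.expectation (blind_arms \<pi> n)
           (\<lambda>a. real (length (filter (\<lambda>i. i \<noteq> j) a)))
         \<le> pseudo_regret K D T (hard_instance D x j) \<pi>"
proof -
  let ?\<nu> = "hard_instance D x j"
  have valid: "valid_instance K D ?\<nu>"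
    using assms(3,4) by (rule valid_instance_hard_instance)
  have gap: "arm_gap K D ?\<nu> i = (if i = j then 0 else 1 - x / real D)" for i
    using assms(2-4)
    by (simp add: arm_gap_def mean_delay_hard_instance min_mean_delay_hard_instance diff_divide_distrib)
  have gap_sum: "(\<Sum>i\<leftarrow>a. arm_gap K D ?\<nu> i) = (1 - x / real D) * real (length (filter (\<lambda>i. i \<noteq> j) a))"
    for a by (induction a) (simp_all add: gap distrib_left)
  have blind: "map_pmf (map fst) (hist ?\<nu> \<pi> n) = blind_arms \<pi> n"
    using set_pmf_hard_instance[OF assms(3,4)]
    by (intro map_fst_hist_without_feedback[OF assms(1) _ assms(6)]) fastforce
  have "(1 - x / real D) * measure_pmf.expectation (blind_arms \<pi> n)
          (\<lambda>a. real (length (filter (\<lambda>i. i \<noteq> j) a)))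
        = measure_pmf.expectation (blind_arms \<pi> n) (\<lambda>a. \<Sum>i\<leftarrow>a. arm_gap K D ?\<nu> i)"
    by (simp add: gap_sum)
  also have "\<dots> = measure_pmf.expectation (hist ?\<nu> \<pi> n) (\<lambda>h. \<Sum>p\<leftarrow>h. arm_gap K D ?\<nu> (fst p))"
    by (simp add: blind[symmetric] o_def del: hist.simps)
  also have "\<dots> \<le> pseudo_regret K D T ?\<nu> \<pi>"
    using assms(1) valid assms(5) by (rule expected_prefix_gaps_le_pseudo_regret)
  finally show ?thesis .
qed

theorem theorem2:
  "\<exists>c>0. \<forall>K D T (dstar::real) \<pi>.
      K \<ge> 2 \<longrightarrow> D \<ge> 1 \<longrightarrow> 0 \<le> dstar \<longrightarrow> dstar \<le> real D / 2 \<longrightarrow> dstar \<le> real T \<longrightarrow>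
      valid_policy K \<pi> \<longrightarrow>
      (\<exists>\<nu>. valid_instance K D \<nu> \<and> min_mean_delay K \<nu> = dstar \<and>
           pseudo_regret K D T \<nu> \<pi> \<ge> c * dstar)"
proof (intro exI[of _ "1/4"] conjI allI impI)
  fix K D T :: nat and dstar :: real and \<pi> :: policy
  assume "K \<ge> 2" "D \<ge> 1" "0 \<le> dstar" "dstar \<le> real D / 2" "dstar \<le> real T"
    and policy: "valid_policy K \<pi>"
  define n where "n = min T (Suc (nat \<lfloor>dstar\<rfloor>))"
  have "n \<le> T" "n \<le> Suc (nat \<lfloor>dstar\<rfloor>)" unfolding n_def by simp_all
  have "dstar < real D" "dstar \<le> real n"
    using \<open>D \<ge> 1\<close> \<open>0 \<le> dstar\<close> \<open>dstar \<le> real D / 2\<close> \<open>dstar \<le> real T\<close> unfolding n_def by linarith+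
  have "finite (set_pmf (blind_arms \<pi> n))" "\<And>a. a \<in> set_pmf (blind_arms \<pi> n) \<Longrightarrow> length a = n"
    "(0::nat) \<noteq> 1"
    using finite_set_pmf_blind_arms[OF policy] length_blind_arms by simp_all
  then obtain j :: nat where "j \<in> {0, 1}" and rarely: "real n / 2 \<le> measure_pmf.expectation (blind_arms \<pi> n)
      (\<lambda>a. real (length (filter (\<lambda>i. i \<noteq> j) a)))"
    by (rule exists_rarely_chosen)
  have "j < K" using \<open>j \<in> {0, 1}\<close> \<open>K \<ge> 2\<close> by auto
  have "1/2 \<le> 1 - dstar / real D"
    using \<open>D \<ge> 1\<close> \<open>dstar \<le> real D / 2\<close> by (simp add: field_simps)
  have "1/4 * dstar \<le> 1/2 * (real n / 2)"
    using \<open>dstar \<le> real n\<close> by simp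
  also have "\<dots> \<le> (1 - dstar / real D) * measure_pmf.expectation (blind_arms \<pi> n)
                    (\<lambda>a. real (length (filter (\<lambda>i. i \<noteq> j) a)))"
    using \<open>1/2 \<le> 1 - dstar / real D\<close> rarely by (intro mult_mono) (linarith | simp)+
  also have "\<dots> \<le> pseudo_regret K D T (hard_instance D dstar j) \<pi>"
    using pseudo_regret_hard_instance_ge[OF policy \<open>j < K\<close> \<open>0 \<le> dstar\<close> \<open>dstar < real D\<close>
        \<open>n \<le> T\<close> \<open>n \<le> Suc (nat \<lfloor>dstar\<rfloor>)\<close>] .
  finally show "\<exists>\<nu>. valid_instance K D \<nu> \<and> min_mean_delay K \<nu> = dstar \<and> 1/4 * dstar \<le> pseudo_regret K D T \<nu> \<pi>"
    using valid_instance_hard_instance[OF \<open>0 \<le> dstar\<close> \<open>dstar < real D\<close>]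
      min_mean_delay_hard_instance[OF \<open>0 \<le> dstar\<close> less_imp_le[OF \<open>dstar < real D\<close>] \<open>j < K\<close>]
    by blast
qed simp

end
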